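(* Let the reaction network have a stoichiometric matrix $S$ of full rank $M$. Then the network is regular, i.e. $\det(SR)\neq 0$ algebraically, if and only if there exists a child selection $J:\mathcal M\to\mathcal E$ such that $J(\mathcal M)$ selects an $S$-basis, i.e. $\det S^{J(\mathcal M)}\neq 0$ (equivalently, $\ker S$ contains no nonzero vector supported in $J(\mathcal M)$).
   Context: A reaction network consists of a finite set of metabolites $\mathcal M=\{1,\dots,M\}$ and a finite set of reactions $\mathcal E=\{1,\dots,E\}$. Each reaction $j$ has an input stoichiometric vector $y^j\in\mathbb R_{\ge0}^M$ and an output stoichiometric vector $\bar y^j\in\mathbb R_{\ge0}^M$. Write $m\vdash j$ (metabolite $m$ is an input, or "mother", of reaction $j$) iff $y^j_m\neq 0$. The stoichiometric matrix $S$ is the real $M\times E$ matrix whose $j$-th column is $S^j=\bar y^j-y^j$. The rate matrix $R=(r_{jm})_{j\in\mathcal E,m\in\mathcal M}$ is the $E\times M$ matrix whose entries $r_{jm}$ with $m\vdash j$ are independent indeterminates, and $r_{jm}=0$ whenever $m\not\vdash j$. A polynomial or rational expression in these indeterminates is "nonzero algebraically" if it is not the zero polynomial / zero rational function. For $\mathcal E'\subseteq\mathcal E$, $S^{\mathcal E'}$ denotes the submatrix of $S$ consisting of the columns indexed by $\mathcal E'$; $\mathcal E'$ "selects an $S$-basis" if $|\mathcal E'|=M$ and $\det S^{\mathcal E'}\neq0$. A child selection is an injective map $J:\mathcal M\to\mathcal E$ with $m\vdash J(m)$ for every $m\in\mathcal M$. The network is called regular if $\det(SR)\neq0$ algebraically.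 *)

theory Defs
  imports "HOL-Analysis.Analysis"
begin

text \<open>Metabolites are the elements of a finite type 'm, reactions those of a finite type 'e.
  Input stoichiometry: y j m = y^j_m; output stoichiometry: yb j m = bar y^j_m.\<close>

definition mother :: "('e \<Rightarrow> 'm \<Rightarrow> real) \<Rightarrow> 'm \<Rightarrow> 'e \<Rightarrow> bool" where
  "mother y m j \<longleftrightarrow> y j m \<noteq> 0"

definition stoich :: "('e::finite \<Rightarrow> 'm::finite \<Rightarrow> real) \<Rightarrow> ('e \<Rightarrow> 'm \<Rightarrow> real) \<Rightarrow> real^'e^'m" where
  "stoich y yb = (\<chi> m j. yb j m - y j m)"

definition rate_matrices :: "('e::finite \<Rightarrow> 'm::finite \<Rightarrow> real) \<Rightarrow> (real^'m^'e) set" where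
  "rate_matrices y = {R. \<forall>j m. \<not> mother y m j \<longrightarrow> R $ j $ m = 0}"

text \<open>Regularity: det(SR) is algebraically nonzero as a polynomial in the indeterminates r_jm.
  Since the coefficients are real and the reals are infinite, this is expressed as:
  the polynomial function det(SR) does not vanish identically on the real specialisations.\<close>
definition regular :: "('e::finite \<Rightarrow> 'm::finite \<Rightarrow> real) \<Rightarrow> ('e \<Rightarrow> 'm \<Rightarrow> real) \<Rightarrow> bool" where
  "regular y yb \<longleftrightarrow> (\<exists>R \<in> rate_matrices y. det (stoich y yb ** R) \<noteq> 0)"

definition child_selection :: "('e \<Rightarrow> 'm \<Rightarrow> real) \<Rightarrow> ('m \<Rightarrow> 'e) \<Rightarrow> bool" where
  "child_selection y J \<longleftrightarrow> inj J \<and> (\<forall>m. mother y m (J m))"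

text \<open>Column submatrix S^{E'} (columns enumerated by a bijection from 'm onto E'; the
  determinant is independent of the enumeration up to sign).\<close>
definition selects_S_basis :: "real^'e^'m \<Rightarrow> 'e set \<Rightarrow> bool" where
  "selects_S_basis S E' \<longleftrightarrow> card E' = CARD('m::finite) \<and>
     (\<exists>f. bij_betw f (UNIV :: 'm set) E' \<and> det ((\<chi> i k. S $ i $ f k) :: real^'m^'m) \<noteq> 0)"

end

theory Submission
  imports Defs "HOL-Library.FuncSet"
begin

text \<open>Column \<open>m\<close> of \<open>S R\<close> is \<open>\<Sum>j. r(j,m) S(j)\<close>, where \<open>S(j)\<close> is column \<open>j\<close>
  of \<open>S\<close>. Multilinearity of the determinant in the columns gives the Cauchy-Binet type
  expansion \<open>det (S R) = \<Sum>J. (\<Prod>m. r(J m, m)) det S(J)\<close> over all maps \<open>J\<close> from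
  metabolites to reactions, \<open>S(J)\<close> having columns \<open>S(J m)\<close>. A term can be nonzero only
  if each \<open>r(J m, m)\<close> is an indeterminate, i.e. \<open>m\<close> is a mother of \<open>J m\<close>, and
  \<open>S(J)\<close> has no repeated column, i.e. \<open>J\<close> is injective: then \<open>J\<close> is a child selection
  whose image selects an \<open>S\<close>-basis. Conversely, for such \<open>J\<close> the specialisation
  \<open>r(J m, m) = 1\<close>, all other entries \<open>0\<close>, gives \<open>S R = S(J)\<close>.\<close>

lemma det_matrix_mult_expansion:
  fixes A :: "'a::comm_ring_1^'k::finite^'n::finite" and B :: "'a^'n^'k"
  shows "det (A ** B) = (\<Sum>f\<in>UNIV. (\<Prod>m\<in>UNIV. B$(f m)$m) * det (\<chi> i k. A$i$(f k)))"
proof -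
  let ?P = "{p. p permutes (UNIV :: 'n set)}"
  have "det (A ** B) = det (transpose (A ** B))"
    by simp
  also have "\<dots> = (\<Sum>p\<in>?P. of_int (sign p) * (\<Prod>m\<in>UNIV. \<Sum>j\<in>UNIV. B$j$m * A$(p m)$j))"
    by (simp add: det_def transpose_def matrix_matrix_mult_def mult.commute)
  also have "\<dots> = (\<Sum>p\<in>?P. of_int (sign p) *
      (\<Sum>f\<in>UNIV. \<Prod>m\<in>UNIV. B$(f m)$m * A$(p m)$(f m)))"
    by (simp add: prod_sum_PiE[of UNIV "\<lambda>_. UNIV"])
  also have "\<dots> = (\<Sum>f\<in>UNIV. (\<Prod>m\<in>UNIV. B$(f m)$m) *
      (\<Sum>p\<in>?P. of_int (sign p) * (\<Prod>m\<in>UNIV. A$(p m)$(f m))))"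
    by (simp add: sum_distrib_left prod.distrib sum.swap[of _ ?P] mult_ac)
  also have "\<dots> = (\<Sum>f\<in>UNIV. (\<Prod>m\<in>UNIV. B$(f m)$m) * det (transpose (\<chi> i k. A$i$(f k))))"
    by (simp add: det_def transpose_def)
  finally show ?thesis
    by simp
qed

lemma det_select_columns_eq_0_if_not_inj:
  fixes A :: "'a::comm_ring_1^'k^'n::finite"
  assumes "\<not> inj f"
  shows "det ((\<chi> i k. A$i$(f k)) :: 'a^'n^'n) = 0"
proof -
  obtain a b where "f a = f b" "a \<noteq> b"
    using assms by (auto simp: inj_def)
  then have "column a ((\<chi> i k. A$i$(f k)) :: 'a^'n^'n) = column b (\<chi> i k. A$i$(f k))"
    by (simp add: column_def vec_eq_iff)
  then show ?thesis
    using det_identical_columns[OF \<open>a \<noteq> b\<close>] by blast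
qed

lemma selects_S_basis_range_iff:
  fixes S :: "real^'e^'m::finite"
  assumes "inj J"
  shows "selects_S_basis S (range J) \<longleftrightarrow> det ((\<chi> i k. S$i$(J k)) :: real^'m^'m) \<noteq> 0"
proof -
  have J: "bij_betw J UNIV (range J)"
    using assms by (simp add: bij_betw_def)
  have "det ((\<chi> i k. S$i$(f k)) :: real^'m^'m) \<noteq> 0 \<longleftrightarrow>
      det ((\<chi> i k. S$i$(J k)) :: real^'m^'m) \<noteq> 0"
    if f: "bij_betw f UNIV (range J)" for f
  proof -
    define p where "p = inv J \<circ> f"
    have "bij p"
      unfolding p_def using f bij_betw_inv_into[OF J] by (rule bij_betw_trans)
    then have "p permutes UNIV"
      by (simp add: permutes_univ bij_iff)
    moreover have "f = J \<circ> p"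
    proof
      fix x
      have "f x \<in> range J"
        using bij_betw_apply[OF f] by simp
      then show "f x = (J \<circ> p) x"
        by (simp add: p_def f_inv_into_f)
    qed
    ultimately show ?thesis
      using det_permute_columns[of p "\<chi> i k. S$i$(J k)"] by simp
  qed
  moreover have "card (range J) = CARD('m)"
    using assms by (simp add: card_image)
  ultimately show ?thesis
    unfolding selects_S_basis_def using J by blast
qed

definition column_selection_matrix :: "('m \<Rightarrow> 'e) \<Rightarrow> 'a::zero_neq_one^'m^'e" where
  "column_selection_matrix J = (\<chi> j m. if j = J m then 1 else 0)"

lemma matrix_mult_column_selection_matrix:
  fixes A :: "'a::comm_ring_1^'e::finite^'n"
  shows "A ** column_selection_matrix J = (\<chi> i k. A$i$(J k))"
  by (simp add: vec_eq_iff matrix_matrix_mult_def column_selection_matrix_def if_distrib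
      cong: if_cong)

lemma ex_rate_matrix_det_ne_0_iff:
  fixes y :: "'e::finite \<Rightarrow> 'm::finite \<Rightarrow> real" and S :: "real^'e^'m"
  shows "(\<exists>R \<in> rate_matrices y. det (S ** R) \<noteq> 0) \<longleftrightarrow>
    (\<exists>J. child_selection y J \<and> det ((\<chi> i k. S$i$(J k)) :: real^'m^'m) \<noteq> 0)"
proof
  assume "\<exists>R \<in> rate_matrices y. det (S ** R) \<noteq> 0"
  then obtain R J where R: "R \<in> rate_matrices y"
    and "(\<Prod>m\<in>UNIV. R$(J m)$m) * det ((\<chi> i k. S$i$(J k)) :: real^'m^'m) \<noteq> 0"
    unfolding det_matrix_mult_expansion by (meson sum.neutral)
  then have R_J: "\<And>m. R$(J m)$m \<noteq> 0" and det_J: "det ((\<chi> i k. S$i$(J k)) :: real^'m^'m) \<noteq> 0"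
    by auto
  have "\<forall>m. mother y m (J m)"
    using R R_J unfolding rate_matrices_def by blast
  moreover have "inj J"
    using det_J det_select_columns_eq_0_if_not_inj by blast
  ultimately show "\<exists>J. child_selection y J \<and> det ((\<chi> i k. S$i$(J k)) :: real^'m^'m) \<noteq> 0"
    using det_J unfolding child_selection_def by blast
next
  assume "\<exists>J. child_selection y J \<and> det ((\<chi> i k. S$i$(J k)) :: real^'m^'m) \<noteq> 0"
  then obtain J where J: "child_selection y J"
    and det_J: "det ((\<chi> i k. S$i$(J k)) :: real^'m^'m) \<noteq> 0"
    by blast
  have "column_selection_matrix J \<in> rate_matrices y"
    using J unfolding child_selection_def rate_matrices_def column_selection_matrix_def by auto
  with det_J show "\<exists>R \<in> rate_matrices y. det (S ** R) \<noteq> 0"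
    by (metis matrix_mult_column_selection_matrix)
qed

theorem theorem2p1:
  fixes y yb :: "'e::finite \<Rightarrow> 'm::finite \<Rightarrow> real"
  assumes "\<forall>j m. y j m \<ge> 0" and "\<forall>j m. yb j m \<ge> 0"
    and "rank (stoich y yb) = CARD('m)"
  shows "regular y yb \<longleftrightarrow> (\<exists>J. child_selection y J \<and> selects_S_basis (stoich y yb) (range J))"
proof -
  have "selects_S_basis (stoich y yb) (range J) \<longleftrightarrow>
      det ((\<chi> i k. stoich y yb $ i $ J k) :: real^'m^'m) \<noteq> 0" if "child_selection y J" for J
    using that by (simp add: child_selection_def selects_S_basis_range_iff)
  then show ?thesis
    unfolding regular_def ex_rate_matrix_det_ne_0_iff by auto
qed

end
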